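(* Let $\gamma(s)$ be an arc-length parametrized proper triharmonic curve immersed in a 3-dimensional Riemannian manifold $M^3$, with curvature $\kappa(s)$ and torsion $\tau(s)$. Then $$2\frac{d}{ds}\left(\kappa^2\kappa''\right)=\kappa\frac{d}{ds}\left(\kappa^2\left[\kappa^2+\tau^2\right]\right).$$
   Context: For an arc-length parametrized curve $\gamma$ in a Riemannian manifold $M$ with Levi-Civita connection $\nabla$, curvature tensor $R^M(X,Y)=\nabla_X\nabla_Y-\nabla_Y\nabla_X-\nabla_{[X,Y]}$ and $T=\gamma'$, $\gamma$ is triharmonic if $\nabla_T^5T+R^M(\nabla_T^3T,T)T-R^M(\nabla_T^2T,\nabla_TT)T=0$; it is proper triharmonic if it is triharmonic but not a geodesic. For a non-geodesic curve in $M^3$, the Frenet frame $\{T,N,B\}$, curvature $\kappa$ and torsion $\tau$ are defined by $\nabla_TT=\kappa N$, $\nabla_TN=-\kappa T+\tau B$, $\nabla_TB=-\tau N$. *)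

theory Defs
  imports "HOL-Analysis.Analysis"
begin

text \<open>Local model of a Riemannian 3-manifold: an open set U of real^3 (a coordinate
chart) carrying a smooth Riemannian metric g, given as a symmetric positive definite
matrix-valued function.  Vector fields along a curve are given by their coordinate
components.\<close>

type_synonym metric = "real^3 \<Rightarrow> real^3^3"

definition pd :: "3 \<Rightarrow> (real^3 \<Rightarrow> real) \<Rightarrow> real^3 \<Rightarrow> real" where
  "pd i f x = deriv (\<lambda>t. f (x + t *\<^sub>R axis i 1)) 0"

fun iter_pd :: "3 list \<Rightarrow> (real^3 \<Rightarrow> real) \<Rightarrow> real^3 \<Rightarrow> real" where
  "iter_pd [] f = f"
| "iter_pd (i # is) f = pd i (iter_pd is f)"

definition smooth_on_R3 :: "(real^3) set \<Rightarrow> (real^3 \<Rightarrow> real) \<Rightarrow> bool" where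
  "smooth_on_R3 U f \<longleftrightarrow> (\<forall>is. \<forall>x\<in>U. iter_pd is f differentiable (at x))"

definition smooth_fun :: "real set \<Rightarrow> (real \<Rightarrow> real) \<Rightarrow> bool" where
  "smooth_fun I f \<longleftrightarrow> (\<forall>n. \<forall>s\<in>I. (deriv ^^ n) f differentiable (at s))"

definition smooth_vfield :: "real set \<Rightarrow> (real \<Rightarrow> real^3) \<Rightarrow> bool" where
  "smooth_vfield I V \<longleftrightarrow> (\<forall>k. smooth_fun I (\<lambda>s. V s $ k))"

definition riemannian_metric :: "(real^3) set \<Rightarrow> metric \<Rightarrow> bool" where
  "riemannian_metric U g \<longleftrightarrow> open U \<and>
     (\<forall>i j. smooth_on_R3 U (\<lambda>x. g x $ i $ j)) \<and>
     (\<forall>x\<in>U. transpose (g x) = g x) \<and>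
     (\<forall>x\<in>U. \<forall>v. v \<noteq> 0 \<longrightarrow> v \<bullet> (g x *v v) > 0)"

definition ginner :: "metric \<Rightarrow> real^3 \<Rightarrow> real^3 \<Rightarrow> real^3 \<Rightarrow> real" where
  "ginner g x v w = v \<bullet> (g x *v w)"

definition christoffel :: "metric \<Rightarrow> real^3 \<Rightarrow> 3 \<Rightarrow> 3 \<Rightarrow> 3 \<Rightarrow> real" where
  "christoffel g x k i j = (1/2) * (\<Sum>l\<in>UNIV. matrix_inv (g x) $ k $ l *
      (pd i (\<lambda>y. g y $ j $ l) x + pd j (\<lambda>y. g y $ i $ l) x - pd l (\<lambda>y. g y $ i $ j) x))"

definition vel :: "(real \<Rightarrow> real^3) \<Rightarrow> real \<Rightarrow> real^3" where
  "vel \<gamma> s = (\<chi> k. deriv (\<lambda>t. \<gamma> t $ k) s)"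

definition covD :: "metric \<Rightarrow> (real \<Rightarrow> real^3) \<Rightarrow> (real \<Rightarrow> real^3) \<Rightarrow> real \<Rightarrow> real^3" where
  "covD g \<gamma> V s = (\<chi> k. deriv (\<lambda>t. V t $ k) s +
      (\<Sum>i\<in>UNIV. \<Sum>j\<in>UNIV. christoffel g (\<gamma> s) k i j * vel \<gamma> s $ i * V s $ j))"

text \<open>Components R^l_{ijk} of R(d_i,d_j)d_k = R^l_{ijk} d_l, for
  R(X,Y) = nabla_X nabla_Y - nabla_Y nabla_X - nabla_[X,Y].\<close>
definition riem_coeff :: "metric \<Rightarrow> real^3 \<Rightarrow> 3 \<Rightarrow> 3 \<Rightarrow> 3 \<Rightarrow> 3 \<Rightarrow> real" where
  "riem_coeff g x l i j k =
     pd i (\<lambda>y. christoffel g y l j k) x - pd j (\<lambda>y. christoffel g y l i k) x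
     + (\<Sum>m\<in>UNIV. christoffel g x l i m * christoffel g x m j k
                 - christoffel g x l j m * christoffel g x m i k)"

definition curvR :: "metric \<Rightarrow> real^3 \<Rightarrow> real^3 \<Rightarrow> real^3 \<Rightarrow> real^3 \<Rightarrow> real^3" where
  "curvR g x X Y Z = (\<chi> l. \<Sum>i\<in>UNIV. \<Sum>j\<in>UNIV. \<Sum>k\<in>UNIV.
      riem_coeff g x l i j k * X $ i * Y $ j * Z $ k)"

definition nablaT :: "metric \<Rightarrow> (real \<Rightarrow> real^3) \<Rightarrow> nat \<Rightarrow> real \<Rightarrow> real^3" where
  "nablaT g \<gamma> n = (covD g \<gamma> ^^ n) (vel \<gamma>)"

definition triharmonic :: "(real^3) set \<Rightarrow> metric \<Rightarrow> real set \<Rightarrow> (real \<Rightarrow> real^3) \<Rightarrow> bool" where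
  "triharmonic U g I \<gamma> \<longleftrightarrow> (\<forall>s\<in>I.
     nablaT g \<gamma> 5 s + curvR g (\<gamma> s) (nablaT g \<gamma> 3 s) (vel \<gamma> s) (vel \<gamma> s)
       - curvR g (\<gamma> s) (nablaT g \<gamma> 2 s) (nablaT g \<gamma> 1 s) (vel \<gamma> s) = 0)"

definition geodesic :: "metric \<Rightarrow> real set \<Rightarrow> (real \<Rightarrow> real^3) \<Rightarrow> bool" where
  "geodesic g I \<gamma> \<longleftrightarrow> (\<forall>s\<in>I. nablaT g \<gamma> 1 s = 0)"

definition proper_triharmonic :: "(real^3) set \<Rightarrow> metric \<Rightarrow> real set \<Rightarrow> (real \<Rightarrow> real^3) \<Rightarrow> bool" where
  "proper_triharmonic U g I \<gamma> \<longleftrightarrow> triharmonic U g I \<gamma> \<and> \<not> geodesic g I \<gamma>"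

definition arclength_curve :: "(real^3) set \<Rightarrow> metric \<Rightarrow> real set \<Rightarrow> (real \<Rightarrow> real^3) \<Rightarrow> bool" where
  "arclength_curve U g I \<gamma> \<longleftrightarrow> open I \<and> is_interval I \<and> smooth_vfield I \<gamma> \<and>
     (\<forall>s\<in>I. \<gamma> s \<in> U) \<and> (\<forall>s\<in>I. ginner g (\<gamma> s) (vel \<gamma> s) (vel \<gamma> s) = 1)"

definition frenet :: "metric \<Rightarrow> real set \<Rightarrow> (real \<Rightarrow> real^3) \<Rightarrow> (real \<Rightarrow> real^3) \<Rightarrow> (real \<Rightarrow> real^3)
     \<Rightarrow> (real \<Rightarrow> real) \<Rightarrow> (real \<Rightarrow> real) \<Rightarrow> bool" where
  "frenet g I \<gamma> N B \<kappa> \<tau> \<longleftrightarrow>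
     smooth_vfield I N \<and> smooth_vfield I B \<and> smooth_fun I \<kappa> \<and> smooth_fun I \<tau> \<and>
     (\<forall>s\<in>I. let x = \<gamma> s; T = vel \<gamma> s in
        ginner g x (N s) (N s) = 1 \<and> ginner g x (B s) (B s) = 1 \<and>
        ginner g x T (N s) = 0 \<and> ginner g x T (B s) = 0 \<and> ginner g x (N s) (B s) = 0) \<and>
     (\<forall>s\<in>I. covD g \<gamma> (vel \<gamma>) s = \<kappa> s *\<^sub>R N s \<and>
             covD g \<gamma> N s = - \<kappa> s *\<^sub>R vel \<gamma> s + \<tau> s *\<^sub>R B s \<and>
             covD g \<gamma> B s = - \<tau> s *\<^sub>R N s)"

end

theory Submission
  imports Defs
begin

text \<open>Write \<open>nabla_T^n T = a_n T + b_n N + c_n B\<close>.  The Frenet equations turn covariant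
  differentiation into the recursion \<open>a_(n+1) = a_n' - \<kappa> b_n\<close>, \<open>b_(n+1) = b_n' + \<kappa> a_n - \<tau> c_n\<close>,
  \<open>c_(n+1) = c_n' + \<tau> b_n\<close>, which gives
  \<open>a_5 = 10\<kappa>\<^sup>3\<kappa>' + 5\<kappa>\<kappa>'\<tau>\<^sup>2 + 5\<kappa>\<^sup>2\<tau>\<tau>' - 10\<kappa>'\<kappa>'' - 5\<kappa>\<kappa>'''\<close>.
  Pairing the triharmonic equation with \<open>T\<close> kills both curvature terms, since
  \<open>\<langle>R(X,Y)Z, Z\<rangle> = 0\<close>: in a chart this antisymmetry of the lowered curvature tensor follows from
  the formula for the Christoffel symbols and the symmetry of the second partial derivatives of
  the metric.  Hence \<open>a_5 = 0\<close>, and the claimed identity is \<open>-(2/5) \<kappa> a_5 = 0\<close>.\<close>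

section \<open>Partial derivatives in a chart\<close>

lemma has_real_derivative_along_line:
  fixes f :: "'a::real_normed_vector \<Rightarrow> real"
  assumes "(f has_derivative f') (at (y + t *\<^sub>R v))"
  shows "((\<lambda>t. f (y + t *\<^sub>R v)) has_real_derivative f' v) (at t)"
proof -
  have "((\<lambda>t. y + t *\<^sub>R v) has_derivative (\<lambda>h. h *\<^sub>R v)) (at t)"
    by (auto intro!: derivative_eq_intros)
  from has_derivative_compose[OF this assms]
  have "((\<lambda>t. f (y + t *\<^sub>R v)) has_derivative (\<lambda>h. f' (h *\<^sub>R v))) (at t)" .
  moreover have "(\<lambda>h. f' (h *\<^sub>R v)) = (*) (f' v)"
    using linear_cmul[OF has_derivative_linear[OF assms]] by (auto simp: mult.commute)
  ultimately show ?thesis by (simp add: has_field_derivative_def)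
qed

lemma pd_eq_derivative:
  fixes f :: "real^3 \<Rightarrow> real"
  assumes "(f has_derivative f') (at x)"
  shows "pd i f x = f' (axis i 1)"
  using has_real_derivative_along_line[of f f' x 0 "axis i 1"] assms
  unfolding pd_def by (auto intro: DERIV_imp_deriv)

lemma has_real_derivative_pd:
  fixes f :: "real^3 \<Rightarrow> real"
  assumes "f differentiable (at x)"
  shows "((\<lambda>t. f (x + t *\<^sub>R axis i 1)) has_real_derivative pd i f x) (at 0)"
proof -
  obtain f' where f': "(f has_derivative f') (at x)"
    using assms differentiable_def by blast
  show ?thesis
    using has_real_derivative_along_line[of f f' x 0] f' pd_eq_derivative[OF f'] by simp
qed

lemma pd_cong_open:
  fixes f h :: "real^3 \<Rightarrow> real"
  assumes "open S" "x \<in> S" "\<And>y. y \<in> S \<Longrightarrow> f y = h y"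
  shows "pd i f x = pd i h x"
proof -
  obtain e where e: "e > 0" "ball x e \<subseteq> S"
    using assms(1,2) openE by blast
  have "eventually (\<lambda>t::real. x + t *\<^sub>R axis i 1 \<in> S) (nhds 0)"
    unfolding eventually_nhds_metric
    by (rule exI[of _ e]) (use e in \<open>auto simp: dist_norm\<close>)
  then have "eventually (\<lambda>t. f (x + t *\<^sub>R axis i 1) = h (x + t *\<^sub>R axis i 1)) (nhds 0)"
    by (rule eventually_mono) (use assms(3) in auto)
  then show ?thesis
    unfolding pd_def by (rule deriv_cong_ev) simp
qed

lemma pd_eqI:
  "((\<lambda>t. f (x + t *\<^sub>R axis i 1)) has_real_derivative D) (at 0) \<Longrightarrow> pd i f x = D"
  unfolding pd_def by (rule DERIV_imp_deriv)

lemma pd_const: "pd i (\<lambda>y. c) x = 0"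
  by (rule pd_eqI) simp

lemma pd_add:
  fixes f h :: "real^3 \<Rightarrow> real"
  assumes "f differentiable (at x)" "h differentiable (at x)"
  shows "pd i (\<lambda>y. f y + h y) x = pd i f x + pd i h x"
  by (rule pd_eqI, rule DERIV_add) (use assms has_real_derivative_pd in blast)+

lemma pd_diff:
  fixes f h :: "real^3 \<Rightarrow> real"
  assumes "f differentiable (at x)" "h differentiable (at x)"
  shows "pd i (\<lambda>y. f y - h y) x = pd i f x - pd i h x"
  by (rule pd_eqI, rule DERIV_diff) (use assms has_real_derivative_pd in blast)+

lemma pd_mult:
  fixes f h :: "real^3 \<Rightarrow> real"
  assumes "f differentiable (at x)" "h differentiable (at x)"
  shows "pd i (\<lambda>y. f y * h y) x = pd i f x * h x + f x * pd i h x"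
  using DERIV_mult[OF has_real_derivative_pd[OF assms(1)] has_real_derivative_pd[OF assms(2)], of i i]
  by (intro pd_eqI) (simp add: mult.commute)

lemma pd_cmult:
  fixes f :: "real^3 \<Rightarrow> real"
  assumes "f differentiable (at x)"
  shows "pd i (\<lambda>y. c * f y) x = c * pd i f x"
  by (rule pd_eqI, rule DERIV_cmult) (use assms has_real_derivative_pd in blast)

lemma pd_sum:
  fixes F :: "'b \<Rightarrow> real^3 \<Rightarrow> real"
  assumes "finite A" "\<And>l. l \<in> A \<Longrightarrow> F l differentiable (at x)"
  shows "pd i (\<lambda>y. \<Sum>l\<in>A. F l y) x = (\<Sum>l\<in>A. pd i (F l) x)"
  by (rule pd_eqI, rule DERIV_sum) (use assms has_real_derivative_pd in blast)+

section \<open>Symmetry of mixed partial derivatives\<close>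

lemma second_difference_mean_value:
  fixes f :: "'a::real_normed_vector \<Rightarrow> real"
  assumes S: "ball x r \<subseteq> S" and f': "\<And>y. y \<in> S \<Longrightarrow> (f has_derivative f' y) (at y)"
    and h: "0 < h" "h * (norm u + norm v) < r"
  shows "\<exists>z. 0 < z \<and> z < h \<and>
    f (x + h *\<^sub>R u + h *\<^sub>R v) - f (x + h *\<^sub>R u) - f (x + h *\<^sub>R v) + f x
      = h * (f' (x + h *\<^sub>R u + z *\<^sub>R v) v - f' (x + z *\<^sub>R v) v)"
proof -
  define F where "F t = f (x + h *\<^sub>R u + t *\<^sub>R v) - f (x + t *\<^sub>R v)" for t
  have in_ball: "x + w \<in> ball x r \<longleftrightarrow> norm w < r" for w
    by (simp add: dist_norm)
  have "(F has_real_derivative f' (x + h *\<^sub>R u + t *\<^sub>R v) v - f' (x + t *\<^sub>R v) v) (at t)"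
    if t: "0 \<le> t" "t \<le> h" for t
  proof -
    have "norm (h *\<^sub>R u + t *\<^sub>R v) \<le> h * norm u + t * norm v"
      using norm_triangle_ineq[of "h *\<^sub>R u" "t *\<^sub>R v"] h t by simp
    also have "\<dots> \<le> h * (norm u + norm v)"
      using t by (simp add: distrib_left mult_right_mono)
    finally have "x + h *\<^sub>R u + t *\<^sub>R v \<in> ball x r"
      using h in_ball by (simp add: add.assoc)
    moreover have "t * norm v \<le> h * (norm u + norm v)"
    proof -
      have "0 \<le> h * norm u" "t * norm v \<le> h * norm v"
        using t h by (simp_all add: mult_right_mono)
      then show ?thesis
        by (simp add: distrib_left)
    qed
    then have "x + t *\<^sub>R v \<in> ball x r"
      using h t in_ball by simp
    ultimately have "x + h *\<^sub>R u + t *\<^sub>R v \<in> S" "x + t *\<^sub>R v \<in> S"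
      using S by blast+
    then have "(f has_derivative f' (x + h *\<^sub>R u + t *\<^sub>R v)) (at (x + h *\<^sub>R u + t *\<^sub>R v))"
      "(f has_derivative f' (x + t *\<^sub>R v)) (at (x + t *\<^sub>R v))"
      using f' by blast+
    then show ?thesis
      unfolding F_def by (rule DERIV_diff[OF has_real_derivative_along_line has_real_derivative_along_line])
  qed
  then obtain z where "0 < z" "z < h"
    "F h - F 0 = (h - 0) * (f' (x + h *\<^sub>R u + z *\<^sub>R v) v - f' (x + z *\<^sub>R v) v)"
    using MVT2[OF h(1), of F "\<lambda>t. f' (x + h *\<^sub>R u + t *\<^sub>R v) v - f' (x + t *\<^sub>R v) v"] by blast
  moreover have "F h - F 0 = f (x + h *\<^sub>R u + h *\<^sub>R v) - f (x + h *\<^sub>R u) - f (x + h *\<^sub>R v) + f x"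
    by (simp add: F_def)
  ultimately show ?thesis
    by auto
qed

lemma second_difference_bound:
  fixes f :: "'a::real_normed_vector \<Rightarrow> real"
  assumes S: "ball x r \<subseteq> S" and f': "\<And>y. y \<in> S \<Longrightarrow> (f has_derivative f' y) (at y)"
    and lin: "linear D" and \<epsilon>: "0 \<le> \<epsilon>"
    and d: "\<And>y. norm (y - x) < d \<Longrightarrow> \<bar>f' y v - f' x v - D (y - x)\<bar> \<le> \<epsilon> * norm (y - x)"
    and h: "0 < h" "h * (norm u + norm v) < min d r"
  shows "\<bar>(f (x + h *\<^sub>R u + h *\<^sub>R v) - f (x + h *\<^sub>R u) - f (x + h *\<^sub>R v) + f x) / h\<^sup>2 - D u\<bar>
    \<le> \<epsilon> * (norm u + 2 * norm v)"
proof -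
  obtain z where z: "0 < z" "z < h" and
    \<Delta>: "f (x + h *\<^sub>R u + h *\<^sub>R v) - f (x + h *\<^sub>R u) - f (x + h *\<^sub>R v) + f x
          = h * (f' (x + h *\<^sub>R u + z *\<^sub>R v) v - f' (x + z *\<^sub>R v) v)"
    using second_difference_mean_value[OF S f' h(1)] h(2) by (meson min_less_iff_conj)
  define P where "P = f' (x + h *\<^sub>R u + z *\<^sub>R v) v - f' (x + z *\<^sub>R v) v"
  have n1: "norm (h *\<^sub>R u + z *\<^sub>R v) \<le> h * norm u + z * norm v"
    using norm_triangle_ineq[of "h *\<^sub>R u" "z *\<^sub>R v"] h z by simp
  have n2: "z * norm v \<le> h * norm v"
    using z by (simp add: mult_right_mono)
  have "0 \<le> h * norm u"
    using h by simp
  then have n3: "z * norm v < d" "h * norm u + z * norm v < d"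
    using n2 h(2) by (simp_all add: distrib_left)
  have "P - h * D u = (f' (x + h *\<^sub>R u + z *\<^sub>R v) v - f' x v - D (h *\<^sub>R u + z *\<^sub>R v))
        - (f' (x + z *\<^sub>R v) v - f' x v - D (z *\<^sub>R v))"
    using lin by (simp add: P_def linear_add linear_cmul)
  then have "\<bar>P - h * D u\<bar> \<le> \<bar>f' (x + h *\<^sub>R u + z *\<^sub>R v) v - f' x v - D (h *\<^sub>R u + z *\<^sub>R v)\<bar>
      + \<bar>f' (x + z *\<^sub>R v) v - f' x v - D (z *\<^sub>R v)\<bar>"
    by (metis abs_triangle_ineq4)
  also have "\<dots> \<le> \<epsilon> * norm (h *\<^sub>R u + z *\<^sub>R v) + \<epsilon> * (z * norm v)"
    using d[of "x + h *\<^sub>R u + z *\<^sub>R v"] d[of "x + z *\<^sub>R v"] n1 n3 z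
    by (intro add_mono) (simp_all add: add.assoc)
  also have "\<dots> \<le> \<epsilon> * (h * (norm u + 2 * norm v))"
  proof -
    have "norm (h *\<^sub>R u + z *\<^sub>R v) + z * norm v \<le> h * (norm u + 2 * norm v)"
      using n1 n2 by (simp add: algebra_simps)
    with \<epsilon> show ?thesis
      by (simp add: distrib_left[symmetric] mult_left_mono)
  qed
  finally have "\<bar>P - h * D u\<bar> / h \<le> \<epsilon> * (norm u + 2 * norm v)"
    using h by (simp add: pos_divide_le_eq mult_ac)
  moreover have "P / h - D u = (P - h * D u) / h"
    using h by (simp add: field_simps)
  moreover have "(f (x + h *\<^sub>R u + h *\<^sub>R v) - f (x + h *\<^sub>R u) - f (x + h *\<^sub>R v) + f x) / h\<^sup>2 = P / h"
    using \<Delta> h by (simp add: P_def power2_eq_square)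
  ultimately show ?thesis
    using h by (simp add: abs_divide)
qed

lemma second_difference_tendsto:
  fixes f :: "'a::real_normed_vector \<Rightarrow> real"
  assumes "open S" "x \<in> S" and f': "\<And>y. y \<in> S \<Longrightarrow> (f has_derivative f' y) (at y)"
    and D: "((\<lambda>y. f' y v) has_derivative D) (at x)"
  shows "((\<lambda>h. (f (x + h *\<^sub>R u + h *\<^sub>R v) - f (x + h *\<^sub>R u) - f (x + h *\<^sub>R v) + f x) / h\<^sup>2)
           \<longlongrightarrow> D u) (at_right 0)"
proof -
  define c where "c = norm u + 2 * norm v + 1"
  have c: "c > 0" "norm u + norm v < c" "norm u + 2 * norm v < c"
    using norm_ge_zero[of u] norm_ge_zero[of v] unfolding c_def by linarith+
  obtain r where r: "r > 0" "ball x r \<subseteq> S"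
    using assms(1,2) openE by blast
  have lin: "linear D"
    using D has_derivative_linear by blast
  have "\<forall>\<^sub>F h in at_right 0.
      dist ((f (x + h *\<^sub>R u + h *\<^sub>R v) - f (x + h *\<^sub>R u) - f (x + h *\<^sub>R v) + f x) / h\<^sup>2) (D u) < e"
    if e: "e > 0" for e
  proof -
    have ec: "e / c > 0"
      using e c by simp
    then obtain d where d: "d > 0" "\<And>y. norm (y - x) < d \<Longrightarrow>
        \<bar>f' y v - f' x v - D (y - x)\<bar> \<le> e / c * norm (y - x)"
      using D unfolding has_derivative_at_alt real_norm_def by blast
    have "\<bar>(f (x + h *\<^sub>R u + h *\<^sub>R v) - f (x + h *\<^sub>R u) - f (x + h *\<^sub>R v) + f x) / h\<^sup>2 - D u\<bar> < e"
      if h: "0 < h" "h < min d r / c" for h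
    proof -
      have "h * (norm u + norm v) \<le> h * c"
        using c h by (simp add: less_imp_le)
      also have "h * c < min d r"
        using h c by (simp add: pos_less_divide_eq)
      finally have hm: "h * (norm u + norm v) < min d r" .
      have "\<bar>(f (x + h *\<^sub>R u + h *\<^sub>R v) - f (x + h *\<^sub>R u) - f (x + h *\<^sub>R v) + f x) / h\<^sup>2 - D u\<bar>
          \<le> e / c * (norm u + 2 * norm v)"
        by (rule second_difference_bound[OF r(2) f' lin less_imp_le[OF ec] d(2) h(1) hm])
      also have "\<dots> < e / c * c"
        using ec c by (intro mult_strict_left_mono) simp_all
      finally show ?thesis
        using c by simp
    qed
    moreover have "min d r / c > 0"
      using d r c by simp
    ultimately show ?thesis
      unfolding eventually_at_right_field dist_real_def by blast
  qed
  then show ?thesis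
    by (simp add: tendsto_iff)
qed

lemma mixed_derivatives_commute:
  fixes f :: "'a::real_normed_vector \<Rightarrow> real"
  assumes "open S" "x \<in> S" "\<And>y. y \<in> S \<Longrightarrow> (f has_derivative f' y) (at y)"
    and "((\<lambda>y. f' y v) has_derivative Dv) (at x)" "((\<lambda>y. f' y u) has_derivative Du) (at x)"
  shows "Dv u = Du v"
proof -
  have "(\<lambda>h. (f (x + h *\<^sub>R v + h *\<^sub>R u) - f (x + h *\<^sub>R v) - f (x + h *\<^sub>R u) + f x) / h\<^sup>2)
      = (\<lambda>h. (f (x + h *\<^sub>R u + h *\<^sub>R v) - f (x + h *\<^sub>R u) - f (x + h *\<^sub>R v) + f x) / h\<^sup>2)"
    by (simp add: ac_simps diff_diff_eq)
  then have "((\<lambda>h. (f (x + h *\<^sub>R u + h *\<^sub>R v) - f (x + h *\<^sub>R u) - f (x + h *\<^sub>R v) + f x) / h\<^sup>2)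
      \<longlongrightarrow> Du v) (at_right 0)"
    using second_difference_tendsto[OF assms(1-3,5), of v] by simp
  with second_difference_tendsto[OF assms(1-4), of u] show ?thesis
    by (rule tendsto_unique[OF trivial_limit_at_right_real])
qed

lemma pd_commute:
  fixes f :: "real^3 \<Rightarrow> real"
  assumes "open S" "x \<in> S" and f: "\<And>y. y \<in> S \<Longrightarrow> f differentiable (at y)"
    and "pd i f differentiable (at x)" "pd j f differentiable (at x)"
  shows "pd i (pd j f) x = pd j (pd i f) x"
proof -
  define f' where "f' y = frechet_derivative f (at y)" for y
  have f': "(f has_derivative f' y) (at y)" if "y \<in> S" for y
    using f[OF that] frechet_derivative_works unfolding f'_def by blast
  have pd_f: "pd k f y = f' y (axis k 1)" if "y \<in> S" for k y
    using pd_eq_derivative[OF f'[OF that]] .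
  have "((\<lambda>y. f' y (axis k 1)) has_derivative frechet_derivative (pd k f) (at x)) (at x)"
    if "pd k f differentiable (at x)" for k
    using has_derivative_transform_within_open[OF that[unfolded frechet_derivative_works] assms(1,2)]
      pd_f by simp
  with assms(4,5) have "frechet_derivative (pd j f) (at x) (axis i 1) = frechet_derivative (pd i f) (at x) (axis j 1)"
    by (intro mixed_derivatives_commute[OF assms(1,2) f'])
  then show ?thesis
    using assms(4,5) by (simp add: pd_eq_derivative frechet_derivative_works)
qed

section \<open>Algebraic symmetry of the curvature tensor\<close>

lemma sum_mult_sum_assoc:
  fixes a :: "'a \<Rightarrow> 'c::comm_semiring_0"
  shows "(\<Sum>l\<in>A. a l * (\<Sum>p\<in>B. b l p * c p)) = (\<Sum>p\<in>B. (\<Sum>l\<in>A. a l * b l p) * c p)"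
  unfolding sum_distrib_left sum_distrib_right mult.assoc by (rule sum.swap)

text \<open>Pointwise data of a metric in a chart: \<open>G\<close> and \<open>H\<close> are the matrices of \<open>g\<^sub>a\<^sub>b\<close> and
  \<open>g\<^sup>a\<^sup>b\<close>, \<open>dG i a b = \<partial>\<^sub>i g\<^sub>a\<^sub>b\<close>, \<open>ddG i j a b = \<partial>\<^sub>i \<partial>\<^sub>j g\<^sub>a\<^sub>b\<close>, \<open>dH i a b = \<partial>\<^sub>i g\<^sup>a\<^sup>b\<close>,
  \<open>\<Gamma> k i j = \<Gamma>\<^sup>k\<^sub>i\<^sub>j\<close> and \<open>d\<Gamma> m k i j = \<partial>\<^sub>m \<Gamma>\<^sup>k\<^sub>i\<^sub>j\<close>.\<close>

locale levi_civita_algebra =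
  fixes G H :: "'n::finite \<Rightarrow> 'n \<Rightarrow> real"
    and dG dH \<Gamma> :: "'n \<Rightarrow> 'n \<Rightarrow> 'n \<Rightarrow> real"
    and ddG d\<Gamma> :: "'n \<Rightarrow> 'n \<Rightarrow> 'n \<Rightarrow> 'n \<Rightarrow> real"
  assumes inverse: "\<And>m p. (\<Sum>l\<in>UNIV. G m l * H l p) = (if m = p then 1 else 0)"
    and H_sym: "\<And>a b. H a b = H b a"
    and dG_sym: "\<And>i a b. dG i a b = dG i b a"
    and ddG_sym: "\<And>i j a b. ddG i j a b = ddG i j b a"
    and ddG_commute: "\<And>i j a b. ddG i j a b = ddG j i a b"
    and dH: "\<And>i m p. (\<Sum>l\<in>UNIV. dG i m l * H l p + G m l * dH i l p) = 0"
    and \<Gamma>_eq: "\<And>k i j. \<Gamma> k i j = 1/2 * (\<Sum>l\<in>UNIV. H k l * (dG i j l + dG j i l - dG l i j))"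
    and d\<Gamma>_eq: "\<And>m k i j. d\<Gamma> m k i j = 1/2 * (\<Sum>l\<in>UNIV. dH m k l * (dG i j l + dG j i l - dG l i j)
                                         + H k l * (ddG m i j l + ddG m j i l - ddG m l i j))"
begin

definition christoffel_first_kind :: "'n \<Rightarrow> 'n \<Rightarrow> 'n \<Rightarrow> real" where
  "christoffel_first_kind l i j = (dG i j l + dG j i l - dG l i j) / 2"

definition christoffel_first_kind_deriv :: "'n \<Rightarrow> 'n \<Rightarrow> 'n \<Rightarrow> 'n \<Rightarrow> real" where
  "christoffel_first_kind_deriv m l i j = (ddG m i j l + ddG m j i l - ddG m l i j) / 2"

definition curv :: "'n \<Rightarrow> 'n \<Rightarrow> 'n \<Rightarrow> 'n \<Rightarrow> real" where
  "curv l i j k = d\<Gamma> i l j k - d\<Gamma> j l i k + (\<Sum>q\<in>UNIV. \<Gamma> l i q * \<Gamma> q j k - \<Gamma> l j q * \<Gamma> q i k)"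

lemma lower_raised:
  "(\<Sum>l\<in>UNIV. G m l * (\<Sum>p\<in>UNIV. H l p * F p)) = F m"
proof -
  have "(\<Sum>l\<in>UNIV. G m l * (\<Sum>p\<in>UNIV. H l p * F p)) = (\<Sum>p\<in>UNIV. (\<Sum>l\<in>UNIV. G m l * H l p) * F p)"
    by (rule sum_mult_sum_assoc)
  also have "\<dots> = (\<Sum>p\<in>UNIV. if m = p then F p else 0)"
    by (rule sum.cong) (simp_all add: inverse)
  finally show ?thesis
    by simp
qed

lemma christoffel_eq: "\<Gamma> k i j = (\<Sum>l\<in>UNIV. H k l * christoffel_first_kind l i j)"
  by (simp add: \<Gamma>_eq christoffel_first_kind_def sum_distrib_left mult_ac)

lemma christoffel_deriv_eq:
  "d\<Gamma> m k i j = (\<Sum>l\<in>UNIV. dH m k l * christoffel_first_kind l i j + H k l * christoffel_first_kind_deriv m l i j)"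
  by (simp add: d\<Gamma>_eq christoffel_first_kind_def christoffel_first_kind_deriv_def sum_distrib_left
      distrib_left mult_ac add_divide_distrib)

lemma lower_christoffel: "(\<Sum>l\<in>UNIV. G m l * \<Gamma> l i j) = christoffel_first_kind m i j"
  unfolding christoffel_eq by (rule lower_raised)

lemma dG_eq_christoffel_first_kind: "dG i m q = christoffel_first_kind q i m + christoffel_first_kind m i q"
  unfolding christoffel_first_kind_def using dG_sym[of i m q] dG_sym[of m i q] dG_sym[of q i m]
  by (simp add: field_simps)

lemma lower_christoffel_deriv:
  "(\<Sum>l\<in>UNIV. G m l * d\<Gamma> i l a b)
     = christoffel_first_kind_deriv i m a b - (\<Sum>q\<in>UNIV. dG i m q * \<Gamma> q a b)"
proof -
  have GdH: "(\<Sum>l\<in>UNIV. G m l * dH i l p) = - (\<Sum>l\<in>UNIV. dG i m l * H l p)" for p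
    using dH[of i m p] by (simp add: sum.distrib eq_neg_iff_add_eq_0 add.commute)
  have "(\<Sum>l\<in>UNIV. G m l * (\<Sum>p\<in>UNIV. dH i l p * christoffel_first_kind p a b))
      = (\<Sum>p\<in>UNIV. (\<Sum>l\<in>UNIV. G m l * dH i l p) * christoffel_first_kind p a b)"
    by (rule sum_mult_sum_assoc)
  also have "\<dots> = - (\<Sum>p\<in>UNIV. (\<Sum>l\<in>UNIV. dG i m l * H l p) * christoffel_first_kind p a b)"
    by (simp add: GdH sum_negf)
  also have "\<dots> = - (\<Sum>l\<in>UNIV. dG i m l * \<Gamma> l a b)"
    by (simp only: christoffel_eq sum_mult_sum_assoc)
  finally show ?thesis
    by (simp add: christoffel_deriv_eq sum.distrib distrib_left lower_raised)
qed

lemma lower_christoffel_square: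
  "(\<Sum>l\<in>UNIV. G m l * (\<Sum>q\<in>UNIV. \<Gamma> l i q * \<Gamma> q j k))
     = (\<Sum>q\<in>UNIV. christoffel_first_kind m i q * \<Gamma> q j k)"
proof -
  have "(\<Sum>l\<in>UNIV. G m l * (\<Sum>q\<in>UNIV. \<Gamma> l i q * \<Gamma> q j k))
      = (\<Sum>q\<in>UNIV. (\<Sum>l\<in>UNIV. G m l * \<Gamma> l i q) * \<Gamma> q j k)"
    by (rule sum_mult_sum_assoc)
  then show ?thesis
    by (simp add: lower_christoffel)
qed

lemma christoffel_first_kind_swap:
  "(\<Sum>q\<in>UNIV. christoffel_first_kind q a b * \<Gamma> q c d) = (\<Sum>q\<in>UNIV. christoffel_first_kind q c d * \<Gamma> q a b)"
proof -
  have "(\<Sum>q\<in>UNIV. christoffel_first_kind q a b * \<Gamma> q c d)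
      = (\<Sum>p\<in>UNIV. (\<Sum>q\<in>UNIV. christoffel_first_kind q a b * H q p) * christoffel_first_kind p c d)"
    unfolding christoffel_eq by (rule sum_mult_sum_assoc)
  also have "\<dots> = (\<Sum>p\<in>UNIV. christoffel_first_kind p c d * \<Gamma> p a b)"
    by (simp add: christoffel_eq H_sym mult_ac sum_distrib_left)
  finally show ?thesis .
qed

lemma lower_curv:
  "(\<Sum>l\<in>UNIV. G m l * curv l i j k)
     = christoffel_first_kind_deriv i m j k - christoffel_first_kind_deriv j m i k
       - (\<Sum>q\<in>UNIV. christoffel_first_kind q i m * \<Gamma> q j k) + (\<Sum>q\<in>UNIV. christoffel_first_kind q j m * \<Gamma> q i k)"
proof -
  have dG\<Gamma>: "(\<Sum>q\<in>UNIV. dG i m q * \<Gamma> q a b)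
      = (\<Sum>q\<in>UNIV. christoffel_first_kind q i m * \<Gamma> q a b) + (\<Sum>q\<in>UNIV. christoffel_first_kind m i q * \<Gamma> q a b)"
    for i a b
    by (simp add: dG_eq_christoffel_first_kind distrib_right sum.distrib)
  have "(\<Sum>l\<in>UNIV. G m l * curv l i j k)
      = (\<Sum>l\<in>UNIV. G m l * d\<Gamma> i l j k) - (\<Sum>l\<in>UNIV. G m l * d\<Gamma> j l i k)
        + (\<Sum>l\<in>UNIV. G m l * (\<Sum>q\<in>UNIV. \<Gamma> l i q * \<Gamma> q j k))
        - (\<Sum>l\<in>UNIV. G m l * (\<Sum>q\<in>UNIV. \<Gamma> l j q * \<Gamma> q i k))"
    by (simp add: curv_def sum.distrib sum_subtractf right_diff_distrib distrib_left)
  then show ?thesis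
    by (simp add: lower_christoffel_deriv lower_christoffel_square dG\<Gamma>)
qed

theorem lower_curv_antisym:
  "(\<Sum>l\<in>UNIV. G m l * curv l i j k) + (\<Sum>l\<in>UNIV. G k l * curv l i j m) = 0"
proof -
  have ddG_eq: "christoffel_first_kind_deriv i m j k + christoffel_first_kind_deriv i k j m = ddG i j k m" for i j
    unfolding christoffel_first_kind_deriv_def using ddG_sym[of i j k m] ddG_sym[of i k j m] ddG_sym[of i m j k]
    by (simp add: field_simps)
  show ?thesis
    unfolding lower_curv
    using christoffel_first_kind_swap[of i m j k] christoffel_first_kind_swap[of j m i k]
      ddG_eq[of i j] ddG_eq[of j i] ddG_commute[of i j k m]
    by simp
qed

end

section \<open>Riemannian metrics in a chart\<close>

lemma det_differentiable:
  fixes M :: "'a::real_normed_vector \<Rightarrow> real^'n^'n"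
  assumes "\<And>i j. (\<lambda>y. M y $ i $ j) differentiable (at x)"
  shows "(\<lambda>y. det (M y)) differentiable (at x)"
proof -
  obtain D where D: "\<And>i j. ((\<lambda>y. M y $ i $ j) has_derivative D i j) (at x)"
    using assms unfolding differentiable_def by metis
  have "(\<lambda>y. \<Prod>i\<in>UNIV. M y $ i $ p i) differentiable (at x)" for p :: "'n \<Rightarrow> 'n"
    unfolding differentiable_def
    using has_derivative_prod[of UNIV "\<lambda>i y. M y $ i $ p i" "\<lambda>i. D i (p i)" x UNIV] D by blast
  then show ?thesis
    unfolding det_def
    by (intro differentiable_sum differentiable_mult differentiable_const ballI)
      (simp_all add: finite_permutations)
qed

lemma inner_antisym_matrix_eq_0:
  fixes M :: "real^'n^'n"
  assumes "transpose M = - M"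
  shows "z \<bullet> (M *v z) = 0"
proof -
  have neg: "(- M) *v z = - (M *v z)"
    by (simp add: matrix_vector_mult_def vec_eq_iff sum_negf)
  have "z \<bullet> (M *v z) = (transpose M *v z) \<bullet> z"
    by (simp add: dot_lmul_matrix)
  also have "\<dots> = - (z \<bullet> (M *v z))"
    by (simp add: assms neg inner_commute)
  finally show ?thesis
    by simp
qed

lemma transpose_eq_self_entry:
  assumes "transpose A = A"
  shows "A $ i $ j = A $ j $ i"
proof -
  have "transpose A $ j $ i = A $ j $ i"
    using assms by simp
  then show ?thesis
    by (simp add: transpose_def)
qed

lemma curvR_eq_sum:
  "curvR g x X Y Z = (\<Sum>i\<in>UNIV. \<Sum>j\<in>UNIV. (X $ i * Y $ j) *\<^sub>R ((\<chi> l k. riem_coeff g x l i j k) *v Z))"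
  by (simp add: curvR_def vec_eq_iff matrix_vector_mult_def sum_component sum_distrib_left mult_ac)

locale riemannian_chart =
  fixes U :: "(real^3) set" and g :: metric
  assumes riemannian: "riemannian_metric U g"
begin

lemma open_chart: "open U"
  using riemannian by (simp add: riemannian_metric_def)

lemma metric_transpose: "x \<in> U \<Longrightarrow> transpose (g x) = g x"
  using riemannian by (simp add: riemannian_metric_def)

lemma metric_sym: "x \<in> U \<Longrightarrow> g x $ a $ b = g x $ b $ a"
  using metric_transpose by (rule transpose_eq_self_entry)

lemma metric_iter_pd_differentiable:
  "x \<in> U \<Longrightarrow> iter_pd is (\<lambda>y. g y $ a $ b) differentiable (at x)"
  using riemannian unfolding riemannian_metric_def smooth_on_R3_def by blast

lemma metric_differentiable: "x \<in> U \<Longrightarrow> (\<lambda>y. g y $ a $ b) differentiable (at x)"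
  using metric_iter_pd_differentiable[of x "[]"] by simp

lemma metric_pd_differentiable: "x \<in> U \<Longrightarrow> pd c (\<lambda>y. g y $ a $ b) differentiable (at x)"
  using metric_iter_pd_differentiable[of x "[c]"] by simp

lemma metric_pd_commute:
  "x \<in> U \<Longrightarrow> pd i (pd j (\<lambda>y. g y $ a $ b)) x = pd j (pd i (\<lambda>y. g y $ a $ b)) x"
  by (rule pd_commute[OF open_chart _ metric_differentiable metric_pd_differentiable metric_pd_differentiable])

lemma ginner_commute:
  assumes "x \<in> U"
  shows "ginner g x v w = ginner g x w v"
proof -
  have "v \<bullet> (g x *v w) = (transpose (g x) *v v) \<bullet> w"
    by (simp add: dot_lmul_matrix)
  then show ?thesis
    using metric_transpose[OF assms] by (simp add: ginner_def inner_commute)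
qed

lemma metric_invertible: "x \<in> U \<Longrightarrow> invertible (g x)"
proof -
  assume x: "x \<in> U"
  have "inj ((*v) (g x))"
  proof (rule injI)
    fix v w
    assume "g x *v v = g x *v w"
    then have "(v - w) \<bullet> (g x *v (v - w)) = 0"
      by (simp add: matrix_vector_mult_diff_distrib)
    moreover have "v - w \<noteq> 0 \<Longrightarrow> (v - w) \<bullet> (g x *v (v - w)) > 0"
      using riemannian x unfolding riemannian_metric_def by blast
    ultimately show "v = w"
      by force
  qed
  then have "det (g x) \<noteq> 0"
    using det_nz_iff_inj[of "(*v) (g x)"] by simp
  then show ?thesis
    by (simp add: invertible_det_nz)
qed

lemma metric_mult_inverse: "x \<in> U \<Longrightarrow> g x ** matrix_inv (g x) = mat 1 \<and> matrix_inv (g x) ** g x = mat 1"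
  using metric_invertible unfolding invertible_def matrix_inv_def by (rule someI_ex)

lemma metric_inverse_sum:
  "x \<in> U \<Longrightarrow> (\<Sum>l\<in>UNIV. g x $ m $ l * matrix_inv (g x) $ l $ p) = (if m = p then 1 else 0)"
  using metric_mult_inverse[of x] by (auto simp: matrix_matrix_mult_def mat_def vec_eq_iff)

lemma inverse_metric_sym: "x \<in> U \<Longrightarrow> matrix_inv (g x) $ a $ b = matrix_inv (g x) $ b $ a"
proof -
  assume x: "x \<in> U"
  let ?H = "matrix_inv (g x)"
  have "transpose ?H = transpose ?H ** (g x ** ?H)"
    using metric_mult_inverse[OF x] by simp
  also have "\<dots> = transpose (g x ** ?H) ** ?H"
    by (simp add: matrix_mul_assoc matrix_transpose_mul metric_transpose[OF x])
  also have "\<dots> = ?H"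
    using metric_mult_inverse[OF x] by simp
  finally show ?thesis
    by (rule transpose_eq_self_entry)
qed

text \<open>Cramer's rule writes the entries of the inverse matrix as quotients of determinants.\<close>
lemma inverse_metric_differentiable:
  assumes x: "x \<in> U"
  shows "(\<lambda>y. matrix_inv (g y) $ k $ p) differentiable (at x)"
proof -
  define M where "M y = (\<chi> i j. if j = k then axis p 1 $ i else g y $ i $ j)" for y
  have inverse_entry: "matrix_inv (g y) $ k $ p = det (M y) / det (g y)" if y: "y \<in> U" for y
  proof -
    have det: "det (g y) \<noteq> 0"
      using metric_invertible[OF y] invertible_det_nz by blast
    have "g y *v (matrix_inv (g y) *v axis p 1) = axis p 1"
      using metric_mult_inverse[OF y] by (simp add: matrix_vector_mul_assoc)
    then have "matrix_inv (g y) *v axis p 1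
        = (\<chi> k. det (\<chi> i j. if j = k then axis p 1 $ i else g y $ i $ j) / det (g y))"
      using cramer[OF det] by blast
    moreover have "(matrix_inv (g y) *v axis p 1) $ k = matrix_inv (g y) $ k $ p"
      by (simp add: matrix_vector_mult_def axis_def if_distrib cong: if_cong)
    ultimately show ?thesis
      by (simp add: M_def)
  qed
  have "(\<lambda>y. M y $ i $ j) differentiable (at x)" for i j
    by (cases "j = k") (simp_all add: M_def metric_differentiable[OF x])
  moreover have "det (g x) \<noteq> 0"
    using metric_invertible[OF x] invertible_det_nz by blast
  ultimately have "(\<lambda>y. det (M y) / det (g y)) differentiable (at x)"
    by (intro differentiable_divide det_differentiable metric_differentiable[OF x])
  then obtain D where "((\<lambda>y. det (M y) / det (g y)) has_derivative D) (at x)"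
    unfolding differentiable_def by blast
  then have "((\<lambda>y. matrix_inv (g y) $ k $ p) has_derivative D) (at x)"
    by (rule has_derivative_transform_within_open[OF _ open_chart x]) (simp add: inverse_entry)
  then show ?thesis
    unfolding differentiable_def by blast
qed

lemma pd_metric_inverse_sum:
  assumes x: "x \<in> U"
  shows "(\<Sum>l\<in>UNIV. pd i (\<lambda>y. g y $ m $ l) x * matrix_inv (g x) $ l $ p
            + g x $ m $ l * pd i (\<lambda>y. matrix_inv (g y) $ l $ p) x) = 0"
proof -
  have "(\<Sum>l\<in>UNIV. pd i (\<lambda>y. g y $ m $ l) x * matrix_inv (g x) $ l $ p
            + g x $ m $ l * pd i (\<lambda>y. matrix_inv (g y) $ l $ p) x)
      = pd i (\<lambda>y. \<Sum>l\<in>UNIV. g y $ m $ l * matrix_inv (g y) $ l $ p) x"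
    using metric_differentiable[OF x] inverse_metric_differentiable[OF x]
    by (simp add: pd_sum pd_mult differentiable_mult)
  also have "\<dots> = pd i (\<lambda>y. if m = p then 1 else 0) x"
    by (rule pd_cong_open[OF open_chart x]) (rule metric_inverse_sum)
  finally show ?thesis
    by (simp add: pd_const)
qed

lemma pd_christoffel:
  assumes x: "x \<in> U"
  shows "pd m (\<lambda>y. christoffel g y k i j) x = 1/2 * (\<Sum>l\<in>UNIV.
      pd m (\<lambda>y. matrix_inv (g y) $ k $ l) x
        * (pd i (\<lambda>y. g y $ j $ l) x + pd j (\<lambda>y. g y $ i $ l) x - pd l (\<lambda>y. g y $ i $ j) x)
      + matrix_inv (g x) $ k $ l
        * (pd m (pd i (\<lambda>y. g y $ j $ l)) x + pd m (pd j (\<lambda>y. g y $ i $ l)) x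
           - pd m (pd l (\<lambda>y. g y $ i $ j)) x))"
proof -
  have bracket: "(\<lambda>y. pd i (\<lambda>y. g y $ j $ l) y + pd j (\<lambda>y. g y $ i $ l) y - pd l (\<lambda>y. g y $ i $ j) y)
      differentiable (at x)" for l
    using metric_pd_differentiable[OF x] by (intro differentiable_add differentiable_diff)
  have summand: "(\<lambda>y. matrix_inv (g y) $ k $ l * (pd i (\<lambda>y. g y $ j $ l) y + pd j (\<lambda>y. g y $ i $ l) y
      - pd l (\<lambda>y. g y $ i $ j) y)) differentiable (at x)" for l
    by (intro differentiable_mult inverse_metric_differentiable[OF x] bracket)
  have total: "(\<lambda>y. \<Sum>l\<in>UNIV. matrix_inv (g y) $ k $ l * (pd i (\<lambda>y. g y $ j $ l) y
      + pd j (\<lambda>y. g y $ i $ l) y - pd l (\<lambda>y. g y $ i $ j) y)) differentiable (at x)"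
    using summand by (intro differentiable_sum) auto
  have partial_bracket: "(\<lambda>y. pd i (\<lambda>y. g y $ j $ l) y + pd j (\<lambda>y. g y $ i $ l) y) differentiable (at x)" for l
    using metric_pd_differentiable[OF x] by (intro differentiable_add)
  show ?thesis
    unfolding christoffel_def
    by (simp only: pd_cmult[OF total] pd_sum[OF finite_class.finite_UNIV summand]
        pd_mult[OF inverse_metric_differentiable[OF x] bracket]
        pd_diff[OF partial_bracket metric_pd_differentiable[OF x]]
        pd_add[OF metric_pd_differentiable[OF x] metric_pd_differentiable[OF x]])
qed

lemma metric_lower_curv_antisym:
  assumes x: "x \<in> U"
  shows "(\<Sum>l\<in>UNIV. g x $ m $ l * riem_coeff g x l i j k) + (\<Sum>l\<in>UNIV. g x $ k $ l * riem_coeff g x l i j m) = 0"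
proof -
  interpret levi_civita_algebra "\<lambda>a b. g x $ a $ b" "\<lambda>a b. matrix_inv (g x) $ a $ b"
    "\<lambda>i a b. pd i (\<lambda>y. g y $ a $ b) x" "\<lambda>i a b. pd i (\<lambda>y. matrix_inv (g y) $ a $ b) x"
    "christoffel g x" "\<lambda>i j a b. pd i (pd j (\<lambda>y. g y $ a $ b)) x"
    "\<lambda>m k i j. pd m (\<lambda>y. christoffel g y k i j) x"
  proof unfold_locales
    show "(\<Sum>l\<in>UNIV. g x $ m $ l * matrix_inv (g x) $ l $ p) = (if m = p then 1 else 0)" for m p
      by (rule metric_inverse_sum[OF x])
    show "matrix_inv (g x) $ a $ b = matrix_inv (g x) $ b $ a" for a b
      by (rule inverse_metric_sym[OF x])
    show "pd i (\<lambda>y. g y $ a $ b) x = pd i (\<lambda>y. g y $ b $ a) x" for i a b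
      by (rule pd_cong_open[OF open_chart x]) (rule metric_sym)
    show "pd i (pd j (\<lambda>y. g y $ a $ b)) x = pd i (pd j (\<lambda>y. g y $ b $ a)) x" for i j a b
      by (intro pd_cong_open[OF open_chart x] ext pd_cong_open[OF open_chart]) (simp_all add: metric_sym)
    show "pd i (pd j (\<lambda>y. g y $ a $ b)) x = pd j (pd i (\<lambda>y. g y $ a $ b)) x" for i j a b
      by (rule metric_pd_commute[OF x])
    show "(\<Sum>l\<in>UNIV. pd i (\<lambda>y. g y $ m $ l) x * matrix_inv (g x) $ l $ p
        + g x $ m $ l * pd i (\<lambda>y. matrix_inv (g y) $ l $ p) x) = 0" for i m p
      by (rule pd_metric_inverse_sum[OF x])
  qed (rule christoffel_def pd_christoffel[OF x])+
  have "curv = riem_coeff g x"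
    by (intro ext) (simp add: curv_def riem_coeff_def)
  with lower_curv_antisym[of m i j k] show ?thesis
    by simp
qed

lemma ginner_curvR_self:
  assumes x: "x \<in> U"
  shows "ginner g x (curvR g x X Y Z) Z = 0"
proof -
  have "ginner g x ((\<chi> l k. riem_coeff g x l i j k) *v Z) Z = 0" for i j
  proof -
    let ?A = "\<chi> l k. riem_coeff g x l i j k"
    have "transpose (g x ** ?A) $ a $ b = - (g x ** ?A) $ a $ b" for a b
      using metric_lower_curv_antisym[OF x, of b i j a]
      by (simp add: transpose_def matrix_matrix_mult_def eq_neg_iff_add_eq_0)
    then have "Z \<bullet> ((g x ** ?A) *v Z) = 0"
      by (intro inner_antisym_matrix_eq_0) (simp add: vec_eq_iff)
    moreover have "ginner g x (?A *v Z) Z = Z \<bullet> ((g x ** ?A) *v Z)"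
      unfolding ginner_commute[OF x, of "?A *v Z"] by (simp add: ginner_def matrix_vector_mul_assoc)
    ultimately show ?thesis
      by simp
  qed
  then show ?thesis
    by (simp add: curvR_eq_sum ginner_def inner_sum_left)
qed

end

lemma covD_cong_open:
  assumes "open I" "s \<in> I" "\<And>t. t \<in> I \<Longrightarrow> V t = W t"
  shows "covD g \<gamma> V s = covD g \<gamma> W s"
proof -
  have "deriv (\<lambda>t. V t $ k) s = deriv (\<lambda>t. W t $ k) s" for k
  proof (rule deriv_cong_ev)
    show "\<forall>\<^sub>F t in nhds s. V t $ k = W t $ k"
      using eventually_nhds_in_open[OF assms(1,2)] by (rule eventually_mono) (simp add: assms(3))
  qed simp
  then show ?thesis
    unfolding covD_def using assms(2,3) by simp
qed

lemma covD_add: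
  assumes "\<And>k. (\<lambda>t. V t $ k) differentiable (at s)" "\<And>k. (\<lambda>t. W t $ k) differentiable (at s)"
  shows "covD g \<gamma> (\<lambda>t. V t + W t) s = covD g \<gamma> V s + covD g \<gamma> W s"
proof -
  have "deriv (\<lambda>t. V t $ k + W t $ k) s = deriv (\<lambda>t. V t $ k) s + deriv (\<lambda>t. W t $ k) s" for k
    using assms[of k] by (intro DERIV_imp_deriv DERIV_add) (simp_all add: DERIV_deriv_iff_real_differentiable)
  then show ?thesis
    by (simp add: covD_def vec_eq_iff sum.distrib distrib_left)
qed

lemma covD_scaleR:
  assumes "(a has_real_derivative a') (at s)" "\<And>k. (\<lambda>t. V t $ k) differentiable (at s)"
  shows "covD g \<gamma> (\<lambda>t. a t *\<^sub>R V t) s = a' *\<^sub>R V s + a s *\<^sub>R covD g \<gamma> V s"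
proof -
  have "deriv (\<lambda>t. a t * V t $ k) s = a' * V s $ k + a s * deriv (\<lambda>t. V t $ k) s" for k
    using assms(1) assms(2)[of k, folded DERIV_deriv_iff_real_differentiable]
    by (intro DERIV_imp_deriv) (auto intro!: derivative_eq_intros)
  then show ?thesis
    by (simp add: covD_def vec_eq_iff sum_distrib_left algebra_simps)
qed

lemma covD_frame_combination:
  assumes "(a has_real_derivative a') (at s)" "(b has_real_derivative b') (at s)"
    "(c has_real_derivative c') (at s)"
    and "\<And>k. (\<lambda>t. T t $ k) differentiable (at s)" "\<And>k. (\<lambda>t. N t $ k) differentiable (at s)"
    "\<And>k. (\<lambda>t. B t $ k) differentiable (at s)"
  shows "covD g \<gamma> (\<lambda>t. a t *\<^sub>R T t + b t *\<^sub>R N t + c t *\<^sub>R B t) s =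
     a' *\<^sub>R T s + a s *\<^sub>R covD g \<gamma> T s + b' *\<^sub>R N s + b s *\<^sub>R covD g \<gamma> N s
     + c' *\<^sub>R B s + c s *\<^sub>R covD g \<gamma> B s"
proof -
  have scaled: "(\<lambda>t. (f t *\<^sub>R V t) $ k) differentiable (at s)"
    if "(f has_real_derivative f') (at s)" "\<And>k. (\<lambda>t. V t $ k) differentiable (at s)" for f f' V k
  proof -
    have "f differentiable (at s)"
      using that(1) real_differentiable_def by blast
    then show ?thesis
      using that(2)[of k] by simp
  qed
  show ?thesis
    using assms scaled[OF assms(1,4)] scaled[OF assms(2,5)] scaled[OF assms(3,6)]
    by (simp add: covD_add covD_scaleR differentiable_add)
qed

section \<open>Frenet curves\<close>

lemma smooth_fun_has_real_derivative:
  assumes "smooth_fun I f" "s \<in> I"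
  shows "((deriv ^^ n) f has_real_derivative (deriv ^^ Suc n) f s) (at s)"
  using assms unfolding smooth_fun_def by (simp add: DERIV_deriv_iff_real_differentiable)

locale frenet_curve = riemannian_chart +
  fixes I :: "real set" and \<gamma> N B :: "real \<Rightarrow> real^3" and \<kappa> \<tau> :: "real \<Rightarrow> real"
  assumes curve: "arclength_curve U g I \<gamma>"
    and frame: "frenet g I \<gamma> N B \<kappa> \<tau>"
begin

abbreviation "\<kappa>' \<equiv> deriv \<kappa>"
abbreviation "\<kappa>'' \<equiv> deriv \<kappa>'"
abbreviation "\<kappa>''' \<equiv> deriv \<kappa>''"
abbreviation "\<tau>' \<equiv> deriv \<tau>"
abbreviation "\<tau>'' \<equiv> deriv \<tau>'"

lemma open_domain: "open I"
  using curve by (simp add: arclength_curve_def)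

lemma curve_in_chart: "s \<in> I \<Longrightarrow> \<gamma> s \<in> U"
  using curve by (simp add: arclength_curve_def)

lemma frame_differentiable:
  assumes "s \<in> I"
  shows "(\<lambda>t. vel \<gamma> t $ k) differentiable (at s)" "(\<lambda>t. N t $ k) differentiable (at s)"
    "(\<lambda>t. B t $ k) differentiable (at s)"
proof -
  have "smooth_fun I (\<lambda>t. \<gamma> t $ k)" "smooth_fun I (\<lambda>t. N t $ k)" "smooth_fun I (\<lambda>t. B t $ k)"
    using curve frame by (simp_all add: arclength_curve_def frenet_def smooth_vfield_def)
  then have "(deriv ^^ 1) (\<lambda>t. \<gamma> t $ k) differentiable (at s)"
    "(deriv ^^ 0) (\<lambda>t. N t $ k) differentiable (at s)" "(deriv ^^ 0) (\<lambda>t. B t $ k) differentiable (at s)"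
    using assms unfolding smooth_fun_def by blast+
  then show "(\<lambda>t. vel \<gamma> t $ k) differentiable (at s)" "(\<lambda>t. N t $ k) differentiable (at s)"
    "(\<lambda>t. B t $ k) differentiable (at s)"
    by (simp_all add: vel_def)
qed

lemma curvature_torsion_derivatives:
  assumes "s \<in> I"
  shows "(\<kappa> has_real_derivative \<kappa>' s) (at s)" "(\<kappa>' has_real_derivative \<kappa>'' s) (at s)"
    "(\<kappa>'' has_real_derivative \<kappa>''' s) (at s)" "(\<kappa>''' has_real_derivative deriv \<kappa>''' s) (at s)"
    "(\<tau> has_real_derivative \<tau>' s) (at s)" "(\<tau>' has_real_derivative \<tau>'' s) (at s)"
    "(\<tau>'' has_real_derivative deriv \<tau>'' s) (at s)"
proof -
  have "smooth_fun I \<kappa>" "smooth_fun I \<tau>"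
    using frame by (simp_all add: frenet_def)
  note d = this[THEN smooth_fun_has_real_derivative, OF assms]
  from d(1)[of 0] d(1)[of 1] d(1)[of 2] d(1)[of 3] d(2)[of 0] d(2)[of 1] d(2)[of 2] show
    "(\<kappa> has_real_derivative \<kappa>' s) (at s)" "(\<kappa>' has_real_derivative \<kappa>'' s) (at s)"
    "(\<kappa>'' has_real_derivative \<kappa>''' s) (at s)" "(\<kappa>''' has_real_derivative deriv \<kappa>''' s) (at s)"
    "(\<tau> has_real_derivative \<tau>' s) (at s)" "(\<tau>' has_real_derivative \<tau>'' s) (at s)"
    "(\<tau>'' has_real_derivative deriv \<tau>'' s) (at s)"
    by (simp_all add: numeral_eq_Suc)
qed

lemma curvature_torsion_differentiable:
  assumes "s \<in> I"
  shows "\<kappa> differentiable (at s)" "\<kappa>' differentiable (at s)" "\<kappa>'' differentiable (at s)"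
    "\<kappa>''' differentiable (at s)" "\<tau> differentiable (at s)" "\<tau>' differentiable (at s)"
    "\<tau>'' differentiable (at s)"
  using curvature_torsion_derivatives[OF assms] real_differentiable_def by blast+

lemma frenet_equations:
  assumes "s \<in> I"
  shows "covD g \<gamma> (vel \<gamma>) s = \<kappa> s *\<^sub>R N s" "covD g \<gamma> N s = - \<kappa> s *\<^sub>R vel \<gamma> s + \<tau> s *\<^sub>R B s"
    "covD g \<gamma> B s = - \<tau> s *\<^sub>R N s"
  using frame assms by (simp_all add: frenet_def)

lemma ginner_frame_tangent:
  assumes "s \<in> I"
  shows "ginner g (\<gamma> s) (a *\<^sub>R vel \<gamma> s + b *\<^sub>R N s + c *\<^sub>R B s) (vel \<gamma> s) = a"
proof -
  have "ginner g (\<gamma> s) (vel \<gamma> s) (vel \<gamma> s) = 1"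
    using curve assms by (simp add: arclength_curve_def)
  moreover have "ginner g (\<gamma> s) (N s) (vel \<gamma> s) = 0" "ginner g (\<gamma> s) (B s) (vel \<gamma> s) = 0"
    using frame assms ginner_commute[OF curve_in_chart[OF assms]] by (auto simp: frenet_def Let_def)
  ultimately show ?thesis
    by (simp add: ginner_def inner_add_left)
qed

lemma nablaT_Suc_frenet:
  assumes nablaT: "\<And>t. t \<in> I \<Longrightarrow> nablaT g \<gamma> n t = a t *\<^sub>R vel \<gamma> t + b t *\<^sub>R N t + c t *\<^sub>R B t"
    and s: "s \<in> I"
    and "(a has_real_derivative a') (at s)" "(b has_real_derivative b') (at s)"
    "(c has_real_derivative c') (at s)"
    and "a'' = a' - \<kappa> s * b s" "b'' = b' + \<kappa> s * a s - \<tau> s * c s" "c'' = c' + \<tau> s * b s"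
  shows "nablaT g \<gamma> (Suc n) s = a'' *\<^sub>R vel \<gamma> s + b'' *\<^sub>R N s + c'' *\<^sub>R B s"
proof -
  have "nablaT g \<gamma> (Suc n) s = covD g \<gamma> (\<lambda>t. a t *\<^sub>R vel \<gamma> t + b t *\<^sub>R N t + c t *\<^sub>R B t) s"
    using covD_cong_open[OF open_domain s nablaT] by (simp add: nablaT_def)
  also have "\<dots> = a' *\<^sub>R vel \<gamma> s + a s *\<^sub>R covD g \<gamma> (vel \<gamma>) s + b' *\<^sub>R N s + b s *\<^sub>R covD g \<gamma> N s
      + c' *\<^sub>R B s + c s *\<^sub>R covD g \<gamma> B s"
    using assms frame_differentiable[OF s] by (intro covD_frame_combination)
  also have "\<dots> = a'' *\<^sub>R vel \<gamma> s + b'' *\<^sub>R N s + c'' *\<^sub>R B s"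
    unfolding assms(6-8) frenet_equations[OF s] by (simp add: algebra_simps)
  finally show ?thesis .
qed

lemma ginner_nablaT_Suc_tangent:
  assumes "\<And>t. t \<in> I \<Longrightarrow> nablaT g \<gamma> n t = a t *\<^sub>R vel \<gamma> t + b t *\<^sub>R N t + c t *\<^sub>R B t"
    and s: "s \<in> I"
    and "(a has_real_derivative a') (at s)" "b differentiable (at s)" "c differentiable (at s)"
  shows "ginner g (\<gamma> s) (nablaT g \<gamma> (Suc n) s) (vel \<gamma> s) = a' - \<kappa> s * b s"
proof -
  have "nablaT g \<gamma> (Suc n) s = (a' - \<kappa> s * b s) *\<^sub>R vel \<gamma> s
      + (deriv b s + \<kappa> s * a s - \<tau> s * c s) *\<^sub>R N s + (deriv c s + \<tau> s * b s) *\<^sub>R B s"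
    using assms by (intro nablaT_Suc_frenet) (simp_all add: DERIV_deriv_iff_real_differentiable)
  then show ?thesis
    by (simp add: ginner_frame_tangent[OF s])
qed

lemma nablaT_1: "s \<in> I \<Longrightarrow> nablaT g \<gamma> 1 s = \<kappa> s *\<^sub>R N s"
  by (simp add: nablaT_def frenet_equations)

lemma nablaT_2:
  assumes "s \<in> I"
  shows "nablaT g \<gamma> 2 s = - (\<kappa> s)\<^sup>2 *\<^sub>R vel \<gamma> s + \<kappa>' s *\<^sub>R N s + (\<kappa> s * \<tau> s) *\<^sub>R B s"
proof -
  have "nablaT g \<gamma> (Suc 1) s = - (\<kappa> s)\<^sup>2 *\<^sub>R vel \<gamma> s + \<kappa>' s *\<^sub>R N s + (\<kappa> s * \<tau> s) *\<^sub>R B s"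
    using nablaT_1 assms
    by (intro nablaT_Suc_frenet[of 1 "\<lambda>_. 0" \<kappa> "\<lambda>_. 0"])
      (auto simp: power2_eq_square intro!: derivative_eq_intros curvature_torsion_derivatives)
  then show ?thesis
    by (simp add: numeral_2_eq_2)
qed

lemma nablaT_3:
  assumes "s \<in> I"
  shows "nablaT g \<gamma> 3 s = (-3 * \<kappa> s * \<kappa>' s) *\<^sub>R vel \<gamma> s
    + (\<kappa>'' s - (\<kappa> s)^3 - \<kappa> s * (\<tau> s)\<^sup>2) *\<^sub>R N s + (2 * \<kappa>' s * \<tau> s + \<kappa> s * \<tau>' s) *\<^sub>R B s"
proof -
  have "nablaT g \<gamma> (Suc 2) s = (-3 * \<kappa> s * \<kappa>' s) *\<^sub>R vel \<gamma> s
    + (\<kappa>'' s - (\<kappa> s)^3 - \<kappa> s * (\<tau> s)\<^sup>2) *\<^sub>R N s + (2 * \<kappa>' s * \<tau> s + \<kappa> s * \<tau>' s) *\<^sub>R B s"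
    using nablaT_2 assms
    by (intro nablaT_Suc_frenet[of 2 "\<lambda>t. - (\<kappa> t)\<^sup>2" \<kappa>' "\<lambda>t. \<kappa> t * \<tau> t"])
      (auto simp: algebra_simps power2_eq_square power3_eq_cube
        intro!: derivative_eq_intros curvature_torsion_derivatives)
  then show ?thesis
    by (simp add: numeral_3_eq_3)
qed

lemma nablaT_4:
  assumes "s \<in> I"
  shows "nablaT g \<gamma> 4 s =
      ((\<kappa> s)^4 + (\<kappa> s)\<^sup>2 * (\<tau> s)\<^sup>2 - 3 * (\<kappa>' s)\<^sup>2 - 4 * \<kappa> s * \<kappa>'' s) *\<^sub>R vel \<gamma> s
    + (\<kappa>''' s - 6 * (\<kappa> s)\<^sup>2 * \<kappa>' s - 3 * \<kappa>' s * (\<tau> s)\<^sup>2 - 3 * \<kappa> s * \<tau> s * \<tau>' s) *\<^sub>R N s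
    + (3 * \<kappa>'' s * \<tau> s + 3 * \<kappa>' s * \<tau>' s + \<kappa> s * \<tau>'' s - (\<kappa> s)^3 * \<tau> s - \<kappa> s * (\<tau> s)^3) *\<^sub>R B s"
proof -
  have "nablaT g \<gamma> (Suc 3) s =
      ((\<kappa> s)^4 + (\<kappa> s)\<^sup>2 * (\<tau> s)\<^sup>2 - 3 * (\<kappa>' s)\<^sup>2 - 4 * \<kappa> s * \<kappa>'' s) *\<^sub>R vel \<gamma> s
    + (\<kappa>''' s - 6 * (\<kappa> s)\<^sup>2 * \<kappa>' s - 3 * \<kappa>' s * (\<tau> s)\<^sup>2 - 3 * \<kappa> s * \<tau> s * \<tau>' s) *\<^sub>R N s
    + (3 * \<kappa>'' s * \<tau> s + 3 * \<kappa>' s * \<tau>' s + \<kappa> s * \<tau>'' s - (\<kappa> s)^3 * \<tau> s - \<kappa> s * (\<tau> s)^3) *\<^sub>R B s"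
    using nablaT_3 assms
    by (intro nablaT_Suc_frenet[of 3 "\<lambda>t. -3 * \<kappa> t * \<kappa>' t" "\<lambda>t. \<kappa>'' t - (\<kappa> t)^3 - \<kappa> t * (\<tau> t)\<^sup>2"
          "\<lambda>t. 2 * \<kappa>' t * \<tau> t + \<kappa> t * \<tau>' t"])
      (auto simp: algebra_simps power2_eq_square power3_eq_cube power4_eq_xxxx
        intro!: derivative_eq_intros curvature_torsion_derivatives)
  then show ?thesis
    by (simp add: numeral_eq_Suc)
qed

lemma ginner_nablaT_5_tangent:
  assumes "s \<in> I"
  shows "ginner g (\<gamma> s) (nablaT g \<gamma> 5 s) (vel \<gamma> s) = 10 * (\<kappa> s)^3 * \<kappa>' s
    + 5 * \<kappa> s * \<kappa>' s * (\<tau> s)\<^sup>2 + 5 * (\<kappa> s)\<^sup>2 * \<tau> s * \<tau>' s - 10 * \<kappa>' s * \<kappa>'' s - 5 * \<kappa> s * \<kappa>''' s"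
proof -
  have "ginner g (\<gamma> s) (nablaT g \<gamma> (Suc 4) s) (vel \<gamma> s) =
      (4 * (\<kappa> s)^3 * \<kappa>' s + 2 * \<kappa> s * \<kappa>' s * (\<tau> s)\<^sup>2 + 2 * (\<kappa> s)\<^sup>2 * \<tau> s * \<tau>' s
        - 10 * \<kappa>' s * \<kappa>'' s - 4 * \<kappa> s * \<kappa>''' s)
      - \<kappa> s * (\<kappa>''' s - 6 * (\<kappa> s)\<^sup>2 * \<kappa>' s - 3 * \<kappa>' s * (\<tau> s)\<^sup>2 - 3 * \<kappa> s * \<tau> s * \<tau>' s)"
    using nablaT_4 assms curvature_torsion_differentiable[OF assms]
    by (intro ginner_nablaT_Suc_tangent[of 4
          "\<lambda>t. (\<kappa> t)^4 + (\<kappa> t)\<^sup>2 * (\<tau> t)\<^sup>2 - 3 * (\<kappa>' t)\<^sup>2 - 4 * \<kappa> t * \<kappa>'' t"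
          "\<lambda>t. \<kappa>''' t - 6 * (\<kappa> t)\<^sup>2 * \<kappa>' t - 3 * \<kappa>' t * (\<tau> t)\<^sup>2 - 3 * \<kappa> t * \<tau> t * \<tau>' t"
          "\<lambda>t. 3 * \<kappa>'' t * \<tau> t + 3 * \<kappa>' t * \<tau>' t + \<kappa> t * \<tau>'' t - (\<kappa> t)^3 * \<tau> t - \<kappa> t * (\<tau> t)^3"])
      (auto simp: algebra_simps power2_eq_square power3_eq_cube power4_eq_xxxx
        intro!: derivative_eq_intros curvature_torsion_derivatives)
  then show ?thesis
    by (simp add: numeral_eq_Suc algebra_simps power2_eq_square power3_eq_cube)
qed

lemma triharmonic_ginner_nablaT_5_tangent:
  assumes "triharmonic U g I \<gamma>" "s \<in> I"
  shows "ginner g (\<gamma> s) (nablaT g \<gamma> 5 s) (vel \<gamma> s) = 0"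
proof -
  let ?T = "vel \<gamma> s"
  have "nablaT g \<gamma> 5 s
      = curvR g (\<gamma> s) (nablaT g \<gamma> 2 s) (nablaT g \<gamma> 1 s) ?T - curvR g (\<gamma> s) (nablaT g \<gamma> 3 s) ?T ?T"
    using assms unfolding triharmonic_def by (simp add: algebra_simps)
  then show ?thesis
    using ginner_curvR_self[OF curve_in_chart[OF assms(2)]] by (simp add: ginner_def inner_diff_left)
qed

lemma triharmonic_curvature_torsion_identity:
  assumes "triharmonic U g I \<gamma>" "s \<in> I"
  shows "2 * deriv (\<lambda>t. (\<kappa> t)\<^sup>2 * \<kappa>'' t) s = \<kappa> s * deriv (\<lambda>t. (\<kappa> t)\<^sup>2 * ((\<kappa> t)\<^sup>2 + (\<tau> t)\<^sup>2)) s"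
proof -
  have tangential: "10 * (\<kappa> s)^3 * \<kappa>' s + 5 * \<kappa> s * \<kappa>' s * (\<tau> s)\<^sup>2 + 5 * (\<kappa> s)\<^sup>2 * \<tau> s * \<tau>' s
      - 10 * \<kappa>' s * \<kappa>'' s - 5 * \<kappa> s * \<kappa>''' s = 0"
    using triharmonic_ginner_nablaT_5_tangent[OF assms] ginner_nablaT_5_tangent[OF assms(2)] by simp
  have "deriv (\<lambda>t. (\<kappa> t)\<^sup>2 * \<kappa>'' t) s = 2 * \<kappa> s * \<kappa>' s * \<kappa>'' s + (\<kappa> s)\<^sup>2 * \<kappa>''' s"
    by (rule DERIV_imp_deriv)
      (auto intro!: derivative_eq_intros curvature_torsion_derivatives assms(2) simp: power2_eq_square)
  moreover have "deriv (\<lambda>t. (\<kappa> t)\<^sup>2 * ((\<kappa> t)\<^sup>2 + (\<tau> t)\<^sup>2)) s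
      = 4 * (\<kappa> s)^3 * \<kappa>' s + 2 * \<kappa> s * \<kappa>' s * (\<tau> s)\<^sup>2 + 2 * (\<kappa> s)\<^sup>2 * \<tau> s * \<tau>' s"
    by (rule DERIV_imp_deriv)
      (auto intro!: derivative_eq_intros curvature_torsion_derivatives assms(2)
        simp: algebra_simps power2_eq_square power3_eq_cube)
  moreover have "2 * (2 * \<kappa> s * \<kappa>' s * \<kappa>'' s + (\<kappa> s)\<^sup>2 * \<kappa>''' s)
      - \<kappa> s * (4 * (\<kappa> s)^3 * \<kappa>' s + 2 * \<kappa> s * \<kappa>' s * (\<tau> s)\<^sup>2 + 2 * (\<kappa> s)\<^sup>2 * \<tau> s * \<tau>' s)
      = - 2/5 * \<kappa> s * (10 * (\<kappa> s)^3 * \<kappa>' s + 5 * \<kappa> s * \<kappa>' s * (\<tau> s)\<^sup>2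
          + 5 * (\<kappa> s)\<^sup>2 * \<tau> s * \<tau>' s - 10 * \<kappa>' s * \<kappa>'' s - 5 * \<kappa> s * \<kappa>''' s)"
    by (simp add: algebra_simps power2_eq_square power3_eq_cube)
  ultimately show ?thesis
    unfolding tangential by simp
qed

end

theorem proposition4p1:
  fixes U :: "(real^3) set" and g :: metric and I :: "real set"
    and \<gamma> N B :: "real \<Rightarrow> real^3" and \<kappa> \<tau> :: "real \<Rightarrow> real"
  assumes "riemannian_metric U g"
    and "arclength_curve U g I \<gamma>"
    and "proper_triharmonic U g I \<gamma>"
    and "frenet g I \<gamma> N B \<kappa> \<tau>"
  shows "\<forall>s\<in>I. 2 * deriv (\<lambda>t. (\<kappa> t)\<^sup>2 * deriv (deriv \<kappa>) t) s
               = \<kappa> s * deriv (\<lambda>t. (\<kappa> t)\<^sup>2 * ((\<kappa> t)\<^sup>2 + (\<tau> t)\<^sup>2)) s"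
proof -
  interpret frenet_curve U g I \<gamma> N B \<kappa> \<tau>
    using assms(1,2,4) by unfold_locales
  have "triharmonic U g I \<gamma>"
    using assms(3) by (simp add: proper_triharmonic_def)
  then show ?thesis
    using triharmonic_curvature_torsion_identity by blast
qed

end
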